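(* Let $\sigma$ be a positive finite Borel measure on $\partial\mathbb D$ and $u$ its Poisson integral, $u(z)=\int_{\partial\mathbb D}\frac{1-|z|^2}{|\xi-z|^2}d\sigma(\xi)$. Suppose there is $\varepsilon\in(0,1)$ such that $\sigma(2I)\le2(1+\varepsilon)\sigma(I)$ for every arc $I\subset\partial\mathbb D$. Then there is $c=c(\varepsilon)>0$ such that $\frac{\sigma(I)}{|I|}\ge c\,u(z_I)$ for every arc $I\subset\partial\mathbb D$.
   Context: $m$ is normalized Lebesgue measure on $\partial\mathbb D$, $|I|=m(I)$; $2I$ is the arc with the same center as $I$ and length $2|I|$ (the whole circle if $2|I|\ge1$); $z_I=(1-|I|)\xi_I$ with $\xi_I$ the center of $I$. *)

theory Defs
  imports "HOL-Analysis.Analysis"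
begin

text \<open>Closed arc of the unit circle with centre xi (|xi| = 1) and normalized length l, 0 < l \<le> 1.
  Its normalized Lebesgue measure is l; for l \<ge> 1/2 the doubled arc (length 2l) is the whole circle.\<close>
definition circ_arc :: "complex \<Rightarrow> real \<Rightarrow> complex set" where
  "circ_arc xi l = {xi * cis (2 * pi * t) | t. \<bar>t\<bar> \<le> l / 2}"

definition poisson_int :: "complex measure \<Rightarrow> complex \<Rightarrow> real" where
  "poisson_int \<sigma> z = (\<integral>xi. (1 - (cmod z)^2) / (cmod (xi - z))^2 \<partial>\<sigma>)"

end

theory Submission
  imports Defs
begin

text \<open>
  Let \<open>I\<close> be the arc of length \<open>l\<close> centred at \<open>\<xi>\<close> and \<open>z = (1 - l)\<xi>\<close>. The numerator of the
  Poisson kernel at \<open>z\<close> is at most \<open>2l\<close>, while \<open>|\<zeta> - z| \<ge> max l (|\<zeta> - \<xi>| / 2)\<close>. By Jordan's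
  inequality the arc \<open>2\<^sup>k I\<close> contains every \<open>\<zeta>\<close> with \<open>|\<zeta> - \<xi>| \<le> 2\<^sup>k\<^sup>+\<^sup>1 l\<close>, so choosing the least
  such \<open>k\<close> bounds the kernel by \<open>(8/l) \<Sum>\<^sub>k 4\<^sup>-\<^sup>k 1\<^bsub>2\<^sup>k I\<^esub>\<close>. Integrating against \<open>\<sigma>\<close> and iterating
  the doubling condition, \<open>\<sigma>(2\<^sup>k I) \<le> (2(1 + \<epsilon>))\<^sup>k \<sigma>(I)\<close>, leaves a geometric series of ratio
  \<open>(1 + \<epsilon>)/2 < 1\<close>, whence \<open>u(z) \<le> 16/(1 - \<epsilon>) \<cdot> \<sigma>(I)/l\<close>.
\<close>

lemma Jordan_inequality:
  fixes x :: real
  assumes "0 \<le> x" "x \<le> pi / 2"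
  shows "2 / pi * x \<le> sin x"
proof -
  have "concave_on {0..pi} sin"
    by (rule f''_le0_imp_concave[where f' = cos and f'' = "\<lambda>x. - sin x"])
       (auto intro!: derivative_eq_intros sin_ge_zero)
  then have "(1 - 2 / pi * x) * sin 0 + 2 / pi * x * sin (pi / 2)
      \<le> sin ((1 - 2 / pi * x) *\<^sub>R 0 + (2 / pi * x) *\<^sub>R (pi / 2))"
    using assms by (intro concave_onD) (auto simp: field_simps)
  then show ?thesis by simp
qed

lemma norm_cis_minus_one: "cmod (cis a - 1) = 2 * \<bar>sin (a / 2)\<bar>"
proof -
  have "(cmod (cis a - 1))^2 = (cos a - 1)^2 + (sin a)^2"
    by (simp add: cmod_power2)
  also have "\<dots> = 2 - 2 * cos (2 * (a / 2))"
    using sin_cos_squared_add[of a] by (simp add: power2_eq_square algebra_simps)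
  also have "\<dots> = (2 * \<bar>sin (a / 2)\<bar>)^2"
    by (simp only: cos_double_sin) (simp add: power2_eq_square)
  finally show ?thesis
    using power2_eq_iff_nonneg[of "cmod (cis a - 1)" "2 * \<bar>sin (a / 2)\<bar>"] by simp
qed

lemma circ_arc_subset_sphere: "cmod xi = 1 \<Longrightarrow> circ_arc xi L \<subseteq> sphere 0 1"
  by (auto simp: circ_arc_def norm_mult)

lemma closed_circ_arc: "closed (circ_arc xi L)"
proof -
  have "circ_arc xi L = (\<lambda>t. xi * cis (2 * pi * t)) ` cball 0 (L / 2)"
    unfolding circ_arc_def setcompr_eq_image by (simp add: cball_def)
  then show ?thesis
    by (auto intro!: compact_imp_closed compact_continuous_image continuous_intros)
qed

lemma in_circ_arc_if_chord_le:
  assumes xi: "cmod xi = 1" and zeta: "cmod zeta = 1" and chord: "cmod (zeta - xi) \<le> 2 * L"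
  shows "zeta \<in> circ_arc xi L"
proof -
  define w where "w = zeta / xi"
  define a where "a = Arg w"
  have "cmod w = 1"
    using xi zeta by (simp add: w_def norm_divide)
  then have "cis a = w"
    unfolding a_def by (subst cis_Arg) (auto simp: sgn_div_norm)
  then have zeta_eq: "zeta = xi * cis a"
    using xi by (auto simp: w_def)
  have "\<bar>a\<bar> \<le> pi"
    using Arg_bounded[of w] by (auto simp: a_def)
  then have "\<bar>a\<bar> / pi \<le> \<bar>sin (a / 2)\<bar>"
    using Jordan_inequality[of "\<bar>a / 2\<bar>"] by (cases "a \<ge> 0") auto
  also have "\<dots> = cmod (xi * (cis a - 1)) / 2"
    using xi by (simp add: norm_mult norm_cis_minus_one)
  also have "\<dots> = cmod (zeta - xi) / 2"
    by (simp add: zeta_eq right_diff_distrib)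
  also have "\<dots> \<le> L"
    using chord by simp
  finally have "\<bar>a / (2 * pi)\<bar> \<le> L / 2"
    by (simp add: abs_divide field_simps)
  then show ?thesis
    unfolding circ_arc_def using zeta_eq by (intro CollectI exI[of _ "a / (2 * pi)"]) simp
qed

lemma circ_arc_eq_sphere:
  assumes "cmod xi = 1" "1 \<le> L"
  shows "circ_arc xi L = sphere 0 1"
proof
  show "sphere 0 1 \<subseteq> circ_arc xi L"
  proof
    fix zeta :: complex
    assume "zeta \<in> sphere 0 1"
    then have "cmod zeta = 1" by simp
    moreover have "cmod (zeta - xi) \<le> 2 * L"
      using norm_triangle_ineq4[of zeta xi] assms \<open>cmod zeta = 1\<close> by simp
    ultimately show "zeta \<in> circ_arc xi L"
      by (rule in_circ_arc_if_chord_le[OF assms(1)])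
  qed
qed (rule circ_arc_subset_sphere[OF assms(1)])

lemma exists_dyadic_scale:
  fixes s d :: real
  assumes "0 < s" "d \<le> 2 ^ N * s"
  obtains k where "k \<le> N" "d \<le> 2 ^ k * s" "2 ^ k * s \<le> max s (2 * d)"
proof -
  define k where "k = (LEAST k. d \<le> 2 ^ k * s)"
  have "k \<le> N" "d \<le> 2 ^ k * s"
    using assms(2) unfolding k_def by (auto intro: Least_le LeastI)
  moreover have "2 ^ k * s \<le> max s (2 * d)"
  proof (cases k)
    case (Suc j)
    then have "\<not> d \<le> 2 ^ j * s"
      unfolding k_def by (metis lessI not_less_Least)
    then show ?thesis using Suc by simp
  qed simp
  ultimately show ?thesis by (rule that)
qed

lemma norm_radial_point:
  assumes "cmod xi = 1" "l \<le> 1"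
  shows "cmod (of_real (1 - l) * xi) = 1 - l"
  using assms by (simp only: norm_mult norm_of_real) simp

lemma norm_diff_radial_ge:
  assumes "cmod xi = 1" "cmod zeta = 1" "0 \<le> l" "l \<le> 1"
  shows "l \<le> cmod (zeta - of_real (1 - l) * xi)"
    and "cmod (zeta - xi) \<le> 2 * cmod (zeta - of_real (1 - l) * xi)"
proof -
  note radial = norm_radial_point[OF assms(1,4)]
  show l_le: "l \<le> cmod (zeta - of_real (1 - l) * xi)"
    using norm_triangle_ineq2[of zeta "of_real (1 - l) * xi"] radial assms(2) by simp
  have "of_real (1 - l) * xi - xi = - (of_real l * xi)"
    by (simp add: algebra_simps)
  then have "cmod (of_real (1 - l) * xi - xi) = l"
    using assms by (simp add: norm_mult)
  then show "cmod (zeta - xi) \<le> 2 * cmod (zeta - of_real (1 - l) * xi)"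
    using norm_triangle_ineq[of "zeta - of_real (1 - l) * xi" "of_real (1 - l) * xi - xi"] l_le
    by simp
qed

lemma poisson_kernel_le_scale:
  assumes xi: "cmod xi = 1" and l: "0 < l" "l \<le> 1"
    and scale: "2 ^ k * l \<le> 2 * cmod (zeta - of_real (1 - l) * xi)"
  shows "(1 - (cmod (of_real (1 - l) * xi))^2) / (cmod (zeta - of_real (1 - l) * xi))^2
     \<le> 8 / l * (1/4)^k"
proof -
  define \<rho> where "\<rho> = cmod (zeta - of_real (1 - l) * xi)"
  have "(2 ^ k * l)^2 \<le> (2 * \<rho>)^2"
    using scale l by (intro power_mono) (auto simp: \<rho>_def)
  moreover have "(4::real) ^ k = 2 ^ k * 2 ^ k"
    by (simp flip: power_mult_distrib)
  ultimately have scale_sq: "4 ^ k * l^2 \<le> 4 * \<rho>^2"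
    by (simp add: power2_eq_square mult_ac)
  have "(1 - (cmod (of_real (1 - l) * xi))^2) / \<rho>^2 = (2 * l - l^2) / \<rho>^2"
    unfolding norm_radial_point[OF xi l(2)] by (simp add: power2_eq_square algebra_simps)
  also have "\<dots> \<le> 2 * l / (4 ^ k * l^2 / 4)"
    by (rule frac_le) (use l scale_sq in auto)
  also have "\<dots> = 8 / l * (1/4)^k"
    using l by (simp add: field_simps power_one_over power2_eq_square)
  finally show ?thesis
    unfolding \<rho>_def .
qed

lemma poisson_kernel_le_dyadic_sum:
  assumes xi: "cmod xi = 1" and zeta: "cmod zeta = 1" and l: "0 < l" "l \<le> 1"
    and N: "1 \<le> 2 ^ N * l"
  shows "(1 - (cmod (of_real (1 - l) * xi))^2) / (cmod (zeta - of_real (1 - l) * xi))^2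
     \<le> 8 / l * (\<Sum>k\<le>N. (1/4)^k * indicator (circ_arc xi (2 ^ k * l)) zeta)"
proof -
  define \<rho> where "\<rho> = cmod (zeta - of_real (1 - l) * xi)"
  define d where "d = cmod (zeta - xi)"
  have \<rho>: "l \<le> \<rho>" "d \<le> 2 * \<rho>"
    using norm_diff_radial_ge[OF xi zeta] l by (auto simp: \<rho>_def d_def)
  have "d \<le> 2 ^ N * (2 * l)"
    using norm_triangle_ineq4[of zeta xi] xi zeta N by (simp add: d_def)
  then obtain k where k: "k \<le> N" "d \<le> 2 ^ k * (2 * l)" "2 ^ k * (2 * l) \<le> max (2 * l) (2 * d)"
    by (rule exists_dyadic_scale[of "2 * l" d N, rotated]) (use l in auto)
  have "2 * (2 ^ k * l) \<le> max (2 * l) (2 * d)"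
    using k(3) by (simp add: mult.left_commute)
  moreover have "max (2 * l) (2 * d) \<le> 4 * \<rho>"
    using \<rho> l by simp
  ultimately have "2 ^ k * l \<le> 2 * \<rho>"
    by linarith
  then have "(1 - (cmod (of_real (1 - l) * xi))^2) / \<rho>^2 \<le> 8 / l * (1/4)^k"
    unfolding \<rho>_def by (rule poisson_kernel_le_scale[OF xi l])
  moreover have "zeta \<in> circ_arc xi (2 ^ k * l)"
    using in_circ_arc_if_chord_le[OF xi zeta] k(2) by (simp add: d_def mult_ac)
  ultimately have "(1 - (cmod (of_real (1 - l) * xi))^2) / \<rho>^2
      \<le> 8 / l * ((1/4)^k * indicator (circ_arc xi (2 ^ k * l)) zeta)"
    by simp
  also have "\<dots> \<le> 8 / l * (\<Sum>j\<le>N. (1/4)^j * indicator (circ_arc xi (2 ^ j * l)) zeta)"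
    using l k(1) by (intro mult_left_mono member_le_sum) auto
  finally show ?thesis
    unfolding \<rho>_def .
qed

lemma poisson_int_le_dyadic_sum:
  assumes sets: "sets \<sigma> = sets (restrict_space borel (sphere 0 1))" and fin: "finite_measure \<sigma>"
    and xi: "cmod xi = 1" and l: "0 < l" "l \<le> 1" and N: "1 \<le> 2 ^ N * l"
  shows "poisson_int \<sigma> (of_real (1 - l) * xi)
     \<le> 8 / l * (\<Sum>k\<le>N. (1/4)^k * measure \<sigma> (circ_arc xi (2 ^ k * l)))"
proof -
  have space: "space \<sigma> = sphere 0 1"
    using sets_eq_imp_space_eq[OF sets] by (simp add: space_restrict_space)
  have arc_sets: "circ_arc xi L \<in> sets \<sigma>" for L
    using circ_arc_subset_sphere[OF xi] closed_circ_arc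
    by (simp add: sets sets_restrict_space_iff borel_closed)
  have "emeasure \<sigma> (circ_arc xi L) < \<infinity>" for L
    using finite_measure.emeasure_finite[OF fin] by (simp add: less_top)
  then have integrable_term:
    "integrable \<sigma> (\<lambda>zeta. (1/4)^k * indicator (circ_arc xi (2 ^ k * l)) zeta :: real)" for k
    using arc_sets by (intro integrable_mult_right integrable_real_indicator) auto
  have "poisson_int \<sigma> (of_real (1 - l) * xi)
      \<le> (\<integral>zeta. 8 / l * (\<Sum>k\<le>N. (1/4)^k * indicator (circ_arc xi (2 ^ k * l)) zeta) \<partial>\<sigma>)"
    unfolding poisson_int_def
  proof (rule integral_mono')
    show "integrable \<sigma> (\<lambda>zeta. 8 / l * (\<Sum>k\<le>N. (1/4)^k * indicator (circ_arc xi (2 ^ k * l)) zeta))"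
      by (intro integrable_mult_right Bochner_Integration.integrable_sum integrable_term)
  next
    fix zeta assume "zeta \<in> space \<sigma>"
    then have "cmod zeta = 1"
      by (simp add: space)
    then show "(1 - (cmod (of_real (1 - l) * xi))^2) / (cmod (zeta - of_real (1 - l) * xi))^2
        \<le> 8 / l * (\<Sum>k\<le>N. (1/4)^k * indicator (circ_arc xi (2 ^ k * l)) zeta)"
      by (rule poisson_kernel_le_dyadic_sum[OF xi _ l N])
    show "0 \<le> 8 / l * (\<Sum>k\<le>N. (1/4)^k * indicator (circ_arc xi (2 ^ k * l)) zeta :: real)"
      using l by (intro mult_nonneg_nonneg sum_nonneg) auto
  qed
  also have "\<dots> = 8 / l * (\<Sum>k\<le>N. (1/4)^k * measure \<sigma> (circ_arc xi (2 ^ k * l) \<inter> space \<sigma>))"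
    by (simp only: integral_mult_right_zero Bochner_Integration.integral_sum[OF integrable_term]
        Bochner_Integration.integral_indicator)
  also have "\<dots> = 8 / l * (\<Sum>k\<le>N. (1/4)^k * measure \<sigma> (circ_arc xi (2 ^ k * l)))"
    using circ_arc_subset_sphere[OF xi] by (simp add: space Int_absorb2)
  finally show ?thesis .
qed

lemma doubling_pow_le:
  fixes m :: "real \<Rightarrow> real"
  assumes doubling: "\<And>L. 0 < L \<Longrightarrow> m (2 * L) \<le> C * m L" and "0 \<le> C" "0 < l"
  shows "m (2 ^ k * l) \<le> C ^ k * m l"
proof (induction k)
  case (Suc k)
  have "m (2 ^ Suc k * l) = m (2 * (2 ^ k * l))"
    by (simp add: mult.assoc)
  also have "\<dots> \<le> C * m (2 ^ k * l)"
    using assms(3) by (intro doubling) simp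
  also have "\<dots> \<le> C * (C ^ k * m l)"
    using Suc \<open>0 \<le> C\<close> by (rule mult_left_mono)
  finally show ?case by simp
qed simp

lemma dyadic_sum_le_of_doubling:
  fixes m :: "real \<Rightarrow> real"
  assumes doubling: "\<And>L. 0 < L \<Longrightarrow> m (2 * L) \<le> 2 * (1 + \<epsilon>) * m L"
    and \<epsilon>: "0 \<le> \<epsilon>" "\<epsilon> < 1" and l: "0 < l" "0 \<le> m l"
  shows "(\<Sum>k\<le>N. (1/4)^k * m (2 ^ k * l)) \<le> 2 / (1 - \<epsilon>) * m l"
proof -
  define q where "q = (1 + \<epsilon>) / 2"
  have q: "0 \<le> q" "q < 1"
    using \<epsilon> by (auto simp: q_def)
  have "(\<Sum>k\<le>N. (1/4)^k * m (2 ^ k * l)) \<le> (\<Sum>k\<le>N. q ^ k * m l)"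
  proof (rule sum_mono)
    fix k
    have "(1/4)^k * m (2 ^ k * l) \<le> (1/4)^k * ((2 * (1 + \<epsilon>)) ^ k * m l)"
      using doubling_pow_le[of m "2 * (1 + \<epsilon>)", OF doubling _ l(1)] \<epsilon> by (intro mult_left_mono) auto
    also have "\<dots> = (1/4 * (2 * (1 + \<epsilon>))) ^ k * m l"
      by (simp only: power_mult_distrib mult.assoc)
    also have "1/4 * (2 * (1 + \<epsilon>)) = q"
      by (simp add: q_def)
    finally show "(1/4)^k * m (2 ^ k * l) \<le> q ^ k * m l" .
  qed
  also have "\<dots> = (\<Sum>k\<le>N. q ^ k) * m l"
    by (simp add: sum_distrib_right)
  also have "\<dots> \<le> 1 / (1 - q) * m l"
  proof (rule mult_right_mono[OF _ l(2)])
    show "(\<Sum>k\<le>N. q ^ k) \<le> 1 / (1 - q)"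
      using sum_le_suminf[OF summable_geometric, of q "{..N}"] suminf_geometric[of q] q by simp
  qed
  also have "1 / (1 - q) = 2 / (1 - \<epsilon>)"
    by (simp add: q_def field_simps)
  finally show ?thesis .
qed

lemma arc_doubling_all_scales:
  assumes doubling: "\<forall>l \<in> {0<..1}. measure \<sigma> (circ_arc xi (2 * l)) \<le> C * measure \<sigma> (circ_arc xi l)"
    and "1 \<le> C" "cmod xi = 1" "0 < L"
  shows "measure \<sigma> (circ_arc xi (2 * L)) \<le> C * measure \<sigma> (circ_arc xi L)"
proof (cases "L \<le> 1")
  case False
  then have "circ_arc xi (2 * L) = circ_arc xi L"
    using circ_arc_eq_sphere[OF assms(3)] by simp
  then show ?thesis
    using \<open>1 \<le> C\<close> by (simp add: mult_le_cancel_right1)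
qed (use doubling \<open>0 < L\<close> in auto)

theorem mainTheorem15:
  fixes \<epsilon> :: real
  assumes "0 < \<epsilon>" "\<epsilon> < 1"
  shows "\<exists>c>0. \<forall>\<sigma> :: complex measure.
     sets \<sigma> = sets (restrict_space borel (sphere 0 1)) \<longrightarrow>
     finite_measure \<sigma> \<longrightarrow>
     (\<forall>xi \<in> sphere 0 1. \<forall>l \<in> {0<..1}.
        measure \<sigma> (circ_arc xi (2 * l)) \<le> 2 * (1 + \<epsilon>) * measure \<sigma> (circ_arc xi l)) \<longrightarrow>
     (\<forall>xi \<in> sphere 0 1. \<forall>l \<in> {0<..1}.
        measure \<sigma> (circ_arc xi l) / l \<ge> c * poisson_int \<sigma> (complex_of_real (1 - l) * xi))"
proof (intro exI[of _ "(1 - \<epsilon>) / 16"] conjI allI impI ballI)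
  show "0 < (1 - \<epsilon>) / 16"
    using assms by simp
  fix \<sigma> :: "complex measure" and xi :: complex and l :: real
  assume sets: "sets \<sigma> = sets (restrict_space borel (sphere 0 1))" and fin: "finite_measure \<sigma>"
    and doubling: "\<forall>xi \<in> sphere 0 1. \<forall>l \<in> {0<..1}.
      measure \<sigma> (circ_arc xi (2 * l)) \<le> 2 * (1 + \<epsilon>) * measure \<sigma> (circ_arc xi l)"
    and xi: "xi \<in> sphere 0 1" and l: "l \<in> {0<..1}"
  define m where "m L = measure \<sigma> (circ_arc xi L)" for L
  have m_doubling: "m (2 * L) \<le> 2 * (1 + \<epsilon>) * m L" if "0 < L" for L
    using arc_doubling_all_scales[of \<sigma> xi "2 * (1 + \<epsilon>)" L] doubling xi assms that
    by (simp add: m_def)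
  obtain N where N: "1 \<le> 2 ^ N * l"
  proof -
    obtain N where "1 / l < 2 ^ N"
      using real_arch_pow[of 2 "1 / l"] by auto
    with l show ?thesis
      by (intro that[of N]) (simp add: field_simps)
  qed
  have "poisson_int \<sigma> (of_real (1 - l) * xi) \<le> 8 / l * (\<Sum>k\<le>N. (1/4)^k * m (2 ^ k * l))"
    unfolding m_def using poisson_int_le_dyadic_sum[OF sets fin _ _ _ N] xi l by simp
  also have "\<dots> \<le> 8 / l * (2 / (1 - \<epsilon>) * m l)"
    using dyadic_sum_le_of_doubling[of m, OF m_doubling] assms l by (intro mult_left_mono) (auto simp: m_def)
  finally have "(1 - \<epsilon>) / 16 * poisson_int \<sigma> (of_real (1 - l) * xi)
      \<le> (1 - \<epsilon>) / 16 * (8 / l * (2 / (1 - \<epsilon>) * m l))"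
    using assms by (intro mult_left_mono) auto
  also have "\<dots> = measure \<sigma> (circ_arc xi l) / l"
    using assms l by (simp add: m_def field_simps)
  finally show "(1 - \<epsilon>) / 16 * poisson_int \<sigma> (of_real (1 - l) * xi) \<le> measure \<sigma> (circ_arc xi l) / l" .
qed

end
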